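(* Let $\psi$ be the four-taxon network described in the context, with $w=0$ and $\gamma=1/2$, and one gene copy per taxon. In the limit $x\to\infty$, the limiting probabilities of the gene tree topologies $((a,b),(c,d))$ and $((a,c),(b,d))$ (both equal to $\tfrac14 e^{-y}$) exceed the limiting probabilities of each of the two trees displayed by $\psi$, namely $((a,(b,c)),d)$ and $(a,((b,c),d))$ (both equal to $\tfrac12-\tfrac{5}{12}e^{-y}$), if and only if $y<\ln(4/3)\approx 0.288$. Consequently, for such $y$ (and all sufficiently large $x$) the most likely gene tree topology is not a tree displayed by $\psi$.
   Context: The network $\psi$ on taxa $A,B,C,D$ (gene copies $a,b,c,d$): the root $r$ has two children $p$ and $q$, with edges $(r,p)$ and $(r,q)$ both of length $x$. Node $p$ has children the leaf $A$ and a reticulation node $h$; node $q$ has children the leaf $D$ and $h$. The reticulation edges $(p,h)$ and $(q,h)$ have length $w=0$ and inheritance probabilities $\gamma$ and $1-\gamma$ respectively. Node $h$ has a single child $m$ via an edge of length $y>0$, and $m$ has the two leaf children $B$ and $C$. A tree is displayed by a network if it is obtained by deleting, for each reticulation node, one of its two incoming edges and then suppressing nodes of in-degree 1 and out-degree 1; here the displayed trees are $((A,(B,C)),D)$ and $(A,((B,C),D))$. Multispecies network coalescent: gene lineages are traced backward in time from the leaves; within each branch every pair of lineages present coalesces independently at rate 1 per coalescent unit for the branch's duration; when a lineage reaches a reticulation node it independently enters the incoming edge $b$ with probability equal to its inheritance probability; above the root all remaining lineages coalesce. Probabilities of gene tree topologies are with respect to this process. *)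

theory Defs
  imports "HOL-Probability.Probability"
begin

text \<open>A gene lineage is represented by the set of
  clusters (sets of gene copies) of the partial gene tree it carries; a rooted gene
  tree topology on {a,b,c,d} is identified with its set of clusters.\<close>

datatype copy = Ga | Gb | Gc | Gd

type_synonym lineage = "copy set set"

definition leaf_lin :: "copy \<Rightarrow> lineage" where
  "leaf_lin g = {{g}}"

definition merge_lin :: "lineage \<Rightarrow> lineage \<Rightarrow> lineage" where
  "merge_lin l1 l2 = l1 \<union> l2 \<union> {\<Union>l1 \<union> \<Union>l2}"

definition merge_step :: "lineage set \<Rightarrow> lineage set pmf" where
  "merge_step L =
     (if finite L \<and> card L \<ge> 2 then
        map_pmf (\<lambda>(l1, l2). insert (merge_lin l1 l2) (L - {l1, l2}))
          (pmf_of_set {(l1, l2). l1 \<in> L \<and> l2 \<in> L \<and> l1 \<noteq> l2})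
      else return_pmf L)"

text \<open>A sequence of k coalescence events (jump chain of the Kingman coalescent).\<close>
primrec merge_seq :: "nat \<Rightarrow> lineage set \<Rightarrow> lineage set pmf" where
  "merge_seq 0 L = return_pmf L"
| "merge_seq (Suc k) L = bind_pmf (merge_step L) (merge_seq k)"

text \<open>Tavare's formula: probability that i lineages coalesce into exactly j lineages
  within time T (coalescent units), for 1 \<le> j \<le> i.\<close>
definition g_coal :: "nat \<Rightarrow> nat \<Rightarrow> real \<Rightarrow> real" where
  "g_coal i j T =
     (\<Sum>k = j..i. exp (- (real k * (real k - 1) / 2) * T) * (2 * real k - 1)
        * (-1) ^ (k - j) * pochhammer (real j) (k - 1) * (fact i / fact (i - k))
        / (fact j * fact (k - j) * pochhammer (real i) k))"

definition num_lin_dist :: "nat \<Rightarrow> real \<Rightarrow> nat pmf" where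
  "num_lin_dist n T = embed_pmf (\<lambda>j. if 1 \<le> j \<and> j \<le> n then g_coal n j T else 0)"

definition branch :: "real \<Rightarrow> lineage set \<Rightarrow> lineage set pmf" where
  "branch T L =
     (if card L \<le> 1 then return_pmf L
      else bind_pmf (num_lin_dist (card L) T) (\<lambda>j. merge_seq (card L - j) L))"

definition root_coal :: "lineage set \<Rightarrow> lineage set pmf" where
  "root_coal L = merge_seq (card L - 1) L"

text \<open>At reticulation node h each lineage independently goes to parent p with
  probability gam and to parent q with probability 1 - gam.\<close>
definition split_ret :: "real \<Rightarrow> lineage set \<Rightarrow> (lineage set \<times> lineage set) pmf" where
  "split_ret gam L =
     map_pmf (\<lambda>f. ({l \<in> L. f l}, {l \<in> L. \<not> f l}))
       (Pi_pmf L False (\<lambda>_. bernoulli_pmf gam))"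

text \<open>Distribution of the gene tree topology under the MSNC on psi with root edges of
  length x, edge (h,m) of length y, reticulation edges of length w and inheritance
  probability gam on (p,h).  Leaf edges carry a single lineage and are omitted.\<close>
definition psi_gene_tree :: "real \<Rightarrow> real \<Rightarrow> real \<Rightarrow> real \<Rightarrow> lineage pmf" where
  "psi_gene_tree x y w gam =
     bind_pmf (branch y {leaf_lin Gb, leaf_lin Gc}) (\<lambda>Lm.
     bind_pmf (split_ret gam Lm) (\<lambda>(Sp, Sq).
     bind_pmf (branch w Sp) (\<lambda>Sp'.
     bind_pmf (branch w Sq) (\<lambda>Sq'.
     bind_pmf (branch x (insert (leaf_lin Ga) Sp')) (\<lambda>Lp.
     bind_pmf (branch x (insert (leaf_lin Gd) Sq')) (\<lambda>Lq.
     map_pmf the_elem (root_coal (Lp \<union> Lq))))))))"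

definition psi_prob :: "real \<Rightarrow> real \<Rightarrow> real \<Rightarrow> real \<Rightarrow> lineage \<Rightarrow> real" where
  "psi_prob x y w gam G = pmf (psi_gene_tree x y w gam) G"

definition singletons :: "copy set set" where
  "singletons = {{Ga}, {Gb}, {Gc}, {Gd}, {Ga, Gb, Gc, Gd}}"

definition T_ab_cd :: lineage where
  "T_ab_cd = singletons \<union> {{Ga, Gb}, {Gc, Gd}}"
definition T_ac_bd :: lineage where
  "T_ac_bd = singletons \<union> {{Ga, Gc}, {Gb, Gd}}"
definition T_disp1 :: lineage where
  "T_disp1 = singletons \<union> {{Gb, Gc}, {Ga, Gb, Gc}}"
definition T_disp2 :: lineage where
  "T_disp2 = singletons \<union> {{Gb, Gc}, {Gb, Gc, Gd}}"

definition displayed_trees :: "lineage set" where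
  "displayed_trees = {T_disp1, T_disp2}"

end

theory Submission
  imports Defs
begin

text \<open>As \<open>x \<rightarrow> \<infinity>\<close>, the at most three lineages entering each root edge \<open>(r,p)\<close>,
  \<open>(r,q)\<close> coalesce completely before reaching \<open>r\<close>, up to an error \<open>O(e\<^sup>-\<^sup>x)\<close> read off
  from Tavare's formula.
  In the limit only the edge \<open>(h,m)\<close> and the reticulation matter: with probability \<open>1 - e\<^sup>-\<^sup>y\<close>
  the lineages b, c coalesce and their common lineage joins a or d, giving a displayed tree;
  otherwise b and c choose parents independently, and \<open>((a,b),(c,d))\<close>, \<open>((a,c),(b,d))\<close> arise exactly
  when they separate, each with probability \<open>e\<^sup>-\<^sup>y/4\<close>. A displayed tree also arises when b, c
  both join a (or d) and coalesce first among the three, which gives \<open>1/2 - 5/12 e\<^sup>-\<^sup>y\<close> in total.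
  The strict inequality between the limits, equivalent to \<open>y < ln (4/3)\<close>, then persists for all
  large x.\<close>

text \<open>Stated with \<open>Suc 0\<close>, the simp normal form of \<open>1 :: nat\<close>.\<close>

lemma g_coal_2:
  "g_coal 2 (Suc 0) T = 1 - exp (-T)"
  "g_coal 2 2 T = exp (-T)"
  by (simp_all add: g_coal_def eval_nat_numeral atLeastAtMostSuc_conv pochhammer_Suc)

lemma g_coal_3:
  "g_coal 3 (Suc 0) T = 1 - 3/2 * exp (-T) + 1/2 * exp (-T) ^ 3"
  "g_coal 3 2 T = 3/2 * (exp (-T) - exp (-T) ^ 3)"
  "g_coal 3 3 T = exp (-T) ^ 3"
proof -
  have "exp (- (3 * T)) = exp (- T) ^ 3"
    by (metis exp_of_nat_mult mult_minus_right of_nat_numeral)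
  then show "g_coal 3 (Suc 0) T = 1 - 3/2 * exp (-T) + 1/2 * exp (-T) ^ 3"
    "g_coal 3 2 T = 3/2 * (exp (-T) - exp (-T) ^ 3)" "g_coal 3 3 T = exp (-T) ^ 3"
    by (simp_all add: g_coal_def eval_nat_numeral atLeastAtMostSuc_conv pochhammer_Suc)
qed

lemma sum_g_coal:
  assumes "n \<in> {2, 3}"
  shows "(\<Sum>j = 1..n. g_coal n j T) = 1"
proof -
  have "{1..2::nat} = {1, 2}" "{1..3::nat} = {1, 2, 3}"
    by auto
  then show ?thesis
    using assms by (auto simp: g_coal_2 g_coal_3 field_simps)
qed

lemma g_coal_nonneg:
  assumes "T \<ge> 0" "n \<in> {2, 3}" "j \<in> {1..n}"
  shows "0 \<le> g_coal n j T"
proof -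
  define u where "u = exp (-T)"
  have u: "0 < u" "u \<le> 1"
    using assms(1) by (auto simp: u_def)
  then have "u ^ 3 \<le> u"
    by (simp add: power3_eq_cube mult_le_one)
  moreover have "0 \<le> 2 - 3 * u + u ^ 3"
  proof -
    have "2 - 3 * u + u ^ 3 = (1 - u)\<^sup>2 * (2 + u)"
      by (simp add: power2_eq_square power3_eq_cube algebra_simps)
    then show ?thesis using u by simp
  qed
  moreover have "n = 2 \<and> (j = 1 \<or> j = 2) \<or> n = 3 \<and> (j = 1 \<or> j = 2 \<or> j = 3)"
    using assms(2,3) by auto
  ultimately show ?thesis
    using u by (elim disjE conjE) (simp_all add: g_coal_2 g_coal_3 u_def[symmetric])
qed

lemma pmf_num_lin_dist:
  assumes "T \<ge> 0" "n \<in> {2, 3}"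
  shows "pmf (num_lin_dist n T) j = (if 1 \<le> j \<and> j \<le> n then g_coal n j T else 0)"
  unfolding num_lin_dist_def
proof (rule pmf_embed_pmf)
  show "0 \<le> (if 1 \<le> j \<and> j \<le> n then g_coal n j T else 0)" for j
    using g_coal_nonneg[OF assms] by simp
  have "(\<integral>\<^sup>+ j. ennreal (if 1 \<le> j \<and> j \<le> n then g_coal n j T else 0) \<partial>count_space UNIV)
      = (\<Sum>j = 1..n. ennreal (if 1 \<le> j \<and> j \<le> n then g_coal n j T else 0))"
    by (rule nn_integral_count_space') auto
  also have "\<dots> = (\<Sum>j = 1..n. ennreal (g_coal n j T))"
    by (rule sum.cong) auto
  also have "\<dots> = ennreal (\<Sum>j = 1..n. g_coal n j T)"
    by (rule sum_ennreal) (use g_coal_nonneg[OF assms] in auto)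
  finally show "(\<integral>\<^sup>+ j. ennreal (if 1 \<le> j \<and> j \<le> n then g_coal n j T else 0) \<partial>count_space UNIV) = 1"
    using sum_g_coal[OF assms(2)] by simp
qed

lemma pmf_bind_num_lin_dist:
  assumes "T \<ge> 0" "n \<in> {2, 3}"
  shows "pmf (num_lin_dist n T \<bind> F) G = (\<Sum>j = 1..n. g_coal n j T * pmf (F j) G)"
proof -
  have "pmf (num_lin_dist n T \<bind> F) G = (\<Sum>j = 1..n. pmf (F j) G * pmf (num_lin_dist n T) j)"
    unfolding pmf_bind
    by (rule integral_measure_pmf_real) (auto simp: set_pmf_iff pmf_num_lin_dist[OF assms] split: if_splits)
  then show ?thesis
    by (simp add: pmf_num_lin_dist[OF assms] mult.commute)
qed

lemma num_lin_dist_0: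
  assumes "n \<in> {2, 3}"
  shows "num_lin_dist n 0 = return_pmf n"
proof (rule pmf_eqI)
  fix j
  show "pmf (num_lin_dist n 0) j = pmf (return_pmf n) j"
  proof (cases "1 \<le> j \<and> j \<le> n")
    case True
    with assms have "n = 2 \<and> (j = 1 \<or> j = 2) \<or> n = 3 \<and> (j = 1 \<or> j = 2 \<or> j = 3)"
      by auto
    then show ?thesis
      using assms by (elim disjE conjE) (simp_all add: pmf_num_lin_dist g_coal_2 g_coal_3)
  next
    case False
    then show ?thesis
      using assms by (auto simp: pmf_num_lin_dist)
  qed
qed

lemma one_minus_g_coal_1_le:
  assumes "n \<in> {2, 3}"
  shows "1 - g_coal n 1 T \<le> 2 * exp (-T)"
proof -
  have u: "0 < exp (-T)" "0 \<le> exp (-T) ^ 3"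
    by simp_all
  from assms consider "n = 2" | "n = 3"
    by blast
  then show ?thesis
  proof cases
    case 1
    then have "1 - g_coal n 1 T = exp (-T)"
      by (simp add: g_coal_2)
    with u show ?thesis
      by linarith
  next
    case 2
    then have "1 - g_coal n 1 T = 3/2 * exp (-T) - 1/2 * exp (-T) ^ 3"
      by (simp add: g_coal_3)
    with u show ?thesis
      by linarith
  qed
qed

lemma measure_pmf_expectation_close_to_atom:
  fixes f :: "'a \<Rightarrow> real"
  assumes "\<And>x. 0 \<le> f x" "\<And>x. f x \<le> 1"
  shows "\<bar>measure_pmf.expectation p f - f a\<bar> \<le> 1 - pmf p a"
proof -
  have int: "integrable p f"
    by (rule measure_pmf.integrable_const_bound[where B = 1]) (use assms in auto)
  have "measure_pmf.expectation p f - f a = measure_pmf.expectation p (\<lambda>x. f x - f a)"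
    using int by (simp add: measure_pmf.prob_space)
  also have "\<bar>\<dots>\<bar> \<le> measure_pmf.expectation p (\<lambda>x. \<bar>f x - f a\<bar>)"
    by (rule integral_abs_bound)
  also have "\<dots> \<le> measure_pmf.expectation p (indicator (- {a}))"
  proof (rule integral_mono)
    show "\<bar>f x - f a\<bar> \<le> indicator (- {a}) x" for x
      using assms[of x] assms[of a] by (auto simp: indicator_def)
  qed (use int in \<open>auto intro: measure_pmf.integrable_const_bound[where B = 1]\<close>)
  also have "\<dots> = 1 - pmf p a"
    using measure_pmf.prob_compl[of "{a}" p] by (simp add: measure_pmf_single Compl_eq_Diff_UNIV)
  finally show ?thesis .
qed

lemma branch_close_to_root_coal:
  assumes "T \<ge> 0" "card L \<le> 3"
  shows "\<bar>pmf (branch T L \<bind> K) G - pmf (root_coal L \<bind> K) G\<bar> \<le> 2 * exp (-T)"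
proof (cases "card L \<le> 1")
  case True
  then show ?thesis
    by (simp add: branch_def root_coal_def)
next
  case False
  define n where "n = card L"
  have n: "n \<in> {2, 3}"
    using False assms(2) by (auto simp: n_def)
  define P where "P j = pmf (merge_seq (n - j) L \<bind> K) G" for j
  have "pmf (branch T L \<bind> K) G = pmf (num_lin_dist n T \<bind> (\<lambda>j. merge_seq (n - j) L \<bind> K)) G"
    using False by (simp add: branch_def n_def bind_assoc_pmf)
  also have "\<dots> = measure_pmf.expectation (num_lin_dist n T) P"
    unfolding P_def by (rule pmf_bind)
  finally have branch: "pmf (branch T L \<bind> K) G = measure_pmf.expectation (num_lin_dist n T) P" .
  have root: "pmf (root_coal L \<bind> K) G = P 1"
    by (simp add: root_coal_def n_def P_def)
  have "\<bar>measure_pmf.expectation (num_lin_dist n T) P - P 1\<bar> \<le> 1 - g_coal n 1 T"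
    using measure_pmf_expectation_close_to_atom[of P "num_lin_dist n T" 1] n
    by (auto simp: P_def pmf_le_1 pmf_num_lin_dist[OF assms(1) n])
  also have "\<dots> \<le> 2 * exp (-T)"
    using n by (rule one_minus_g_coal_1_le)
  finally show ?thesis
    unfolding branch root .
qed

lemma set_pmf_merge_step_card:
  assumes "finite L" "S \<in> set_pmf (merge_step L)"
  shows "finite S \<and> card S \<le> card L"
proof (cases "card L \<ge> 2")
  case True
  define P where "P = {(l1, l2). l1 \<in> L \<and> l2 \<in> L \<and> l1 \<noteq> l2}"
  have "finite P"
    unfolding P_def by (rule finite_subset[of _ "L \<times> L"]) (use assms(1) in auto)
  moreover have "P \<noteq> {}"
    using True assms(1) card_le_Suc0_iff_eq[of L] by (auto simp: P_def)
  ultimately obtain l1 l2 where "l1 \<in> L" "l2 \<in> L" "l1 \<noteq> l2"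
    and S: "S = insert (merge_lin l1 l2) (L - {l1, l2})"
    using assms True unfolding merge_step_def P_def[symmetric] by (auto simp: P_def)
  then have "card (L - {l1, l2}) = card L - 2"
    using assms(1) by (simp add: card_Diff_subset)
  moreover have "card S \<le> Suc (card (L - {l1, l2}))"
    unfolding S by (rule card_insert_le_m1) simp_all
  ultimately show ?thesis
    using True assms(1) S by simp
next
  case False
  then show ?thesis
    using assms by (auto simp: merge_step_def)
qed

lemma set_pmf_merge_seq_card:
  "finite L \<Longrightarrow> S \<in> set_pmf (merge_seq k L) \<Longrightarrow> finite S \<and> card S \<le> card L"
proof (induction k arbitrary: L)
  case (Suc k)
  then obtain L' where L': "L' \<in> set_pmf (merge_step L)" "S \<in> set_pmf (merge_seq k L')"
    by auto
  with set_pmf_merge_step_card[OF Suc.prems(1)] have "finite L'" "card L' \<le> card L"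
    by auto
  with Suc.IH[OF _ L'(2)] show ?case
    by auto
qed simp

lemma set_pmf_branch_card:
  "finite L \<Longrightarrow> S \<in> set_pmf (branch T L) \<Longrightarrow> finite S \<and> card S \<le> card L"
  unfolding branch_def by (auto split: if_splits dest: set_pmf_merge_seq_card)

lemma set_pmf_split_ret_subset:
  "(Sp, Sq) \<in> set_pmf (split_ret gam L) \<Longrightarrow> Sp \<subseteq> L \<and> Sq \<subseteq> L"
  unfolding split_ret_def by auto

lemma pmf_bind_diff_le:
  assumes "\<And>a. a \<in> set_pmf M \<Longrightarrow> \<bar>pmf (f a) G - pmf (g a) G\<bar> \<le> c"
  shows "\<bar>pmf (M \<bind> f) G - pmf (M \<bind> g) G\<bar> \<le> c"
proof -
  have int: "integrable M (\<lambda>a. pmf (h a) G)" for h :: "'a \<Rightarrow> 'b pmf"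
    by (rule measure_pmf.integrable_const_bound[where B = 1]) (auto simp: pmf_le_1)
  have "\<bar>pmf (M \<bind> f) G - pmf (M \<bind> g) G\<bar> = \<bar>\<integral>a. pmf (f a) G - pmf (g a) G \<partial>M\<bar>"
    unfolding pmf_bind using int by simp
  also have "\<dots> \<le> (\<integral>a. \<bar>pmf (f a) G - pmf (g a) G\<bar> \<partial>M)"
    by (rule integral_abs_bound)
  also have "\<dots> \<le> c"
    using int assms by (intro measure_pmf.integral_le_const) (auto simp: AE_measure_pmf_iff)
  finally show ?thesis .
qed

lemma branches_close_to_root_coal:
  assumes "T \<ge> 0" "card A \<le> 3" "card D \<le> 3"
  shows "\<bar>pmf (branch T A \<bind> (\<lambda>Lp. branch T D \<bind> R Lp)) G
          - pmf (root_coal A \<bind> (\<lambda>Lp. root_coal D \<bind> R Lp)) G\<bar> \<le> 4 * exp (-T)"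
proof -
  have "\<bar>pmf (branch T A \<bind> (\<lambda>Lp. branch T D \<bind> R Lp)) G
          - pmf (branch T A \<bind> (\<lambda>Lp. root_coal D \<bind> R Lp)) G\<bar> \<le> 2 * exp (-T)"
    by (intro pmf_bind_diff_le branch_close_to_root_coal assms)
  moreover have "\<bar>pmf (branch T A \<bind> (\<lambda>Lp. root_coal D \<bind> R Lp)) G
          - pmf (root_coal A \<bind> (\<lambda>Lp. root_coal D \<bind> R Lp)) G\<bar> \<le> 2 * exp (-T)"
    by (intro branch_close_to_root_coal assms)
  ultimately show ?thesis
    by linarith
qed

text \<open>The root edges \<open>(r,p)\<close> and \<open>(r,q)\<close> of \<open>psi_gene_tree\<close> replaced by complete
  coalescence, their limit as \<open>x \<rightarrow> \<infinity>\<close>.\<close>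

definition psi_limit :: "real \<Rightarrow> real \<Rightarrow> real \<Rightarrow> lineage pmf" where
  "psi_limit y w gam =
     bind_pmf (branch y {leaf_lin Gb, leaf_lin Gc}) (\<lambda>Lm.
     bind_pmf (split_ret gam Lm) (\<lambda>(Sp, Sq).
     bind_pmf (branch w Sp) (\<lambda>Sp'.
     bind_pmf (branch w Sq) (\<lambda>Sq'.
     bind_pmf (root_coal (insert (leaf_lin Ga) Sp')) (\<lambda>Lp.
     bind_pmf (root_coal (insert (leaf_lin Gd) Sq')) (\<lambda>Lq.
     map_pmf the_elem (root_coal (Lp \<union> Lq))))))))"

lemma psi_prob_close_to_limit:
  assumes "x \<ge> 0"
  shows "\<bar>psi_prob x y w gam G - pmf (psi_limit y w gam) G\<bar> \<le> 4 * exp (-x)"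
  unfolding psi_prob_def psi_gene_tree_def psi_limit_def
proof (intro pmf_bind_diff_le, clarify, intro pmf_bind_diff_le)
  fix Lm Sp Sq Sp' Sq'
  assume "Lm \<in> set_pmf (branch y {leaf_lin Gb, leaf_lin Gc})"
    and "(Sp, Sq) \<in> set_pmf (split_ret gam Lm)"
    and "Sp' \<in> set_pmf (branch w Sp)" "Sq' \<in> set_pmf (branch w Sq)"
  have "card {leaf_lin Gb, leaf_lin Gc} \<le> 2"
    by (rule card_insert_le_m1) auto
  then have "finite Lm" "card Lm \<le> 2"
    using set_pmf_branch_card[OF _ \<open>Lm \<in> _\<close>] by auto
  moreover have "Sp \<subseteq> Lm" "Sq \<subseteq> Lm"
    using set_pmf_split_ret_subset[OF \<open>(Sp, Sq) \<in> _\<close>] by auto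
  ultimately have "finite Sp" "card Sp \<le> 2" "finite Sq" "card Sq \<le> 2"
    by (auto intro: finite_subset card_mono le_trans)
  then have "card Sp' \<le> 2" "card Sq' \<le> 2"
    using set_pmf_branch_card[OF _ \<open>Sp' \<in> _\<close>] set_pmf_branch_card[OF _ \<open>Sq' \<in> _\<close>] by auto
  then have "card (insert (leaf_lin Ga) Sp') \<le> 3" "card (insert (leaf_lin Gd) Sq') \<le> 3"
    by (simp_all add: card_insert_le_m1)
  then show "\<bar>pmf (branch x (insert (leaf_lin Ga) Sp') \<bind> (\<lambda>Lp. branch x (insert (leaf_lin Gd) Sq') \<bind>
                (\<lambda>Lq. map_pmf the_elem (root_coal (Lp \<union> Lq))))) G
          - pmf (root_coal (insert (leaf_lin Ga) Sp') \<bind> (\<lambda>Lp. root_coal (insert (leaf_lin Gd) Sq') \<bind>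
                (\<lambda>Lq. map_pmf the_elem (root_coal (Lp \<union> Lq))))) G\<bar> \<le> 4 * exp (-x)"
    by (rule branches_close_to_root_coal[OF assms])
qed

lemma merge_lin_commute: "merge_lin l1 l2 = merge_lin l2 l1"
  unfolding merge_lin_def by auto

lemma merge_step_doubleton:
  assumes "l1 \<noteq> l2"
  shows "merge_step {l1, l2} = return_pmf {merge_lin l1 l2}"
proof -
  define P where "P = {(a, b). a \<in> {l1, l2} \<and> b \<in> {l1, l2} \<and> a \<noteq> b}"
  have P: "P = {(l1, l2), (l2, l1)}"
    using assms unfolding P_def by auto
  have "merge_step {l1, l2} = map_pmf (\<lambda>(a, b). insert (merge_lin a b) ({l1, l2} - {a, b})) (pmf_of_set P)"
    using assms unfolding merge_step_def P_def by simp
  also have "\<dots> = map_pmf (\<lambda>_. {merge_lin l1 l2}) (pmf_of_set P)"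
    by (rule map_pmf_cong) (auto simp: P merge_lin_commute)
  finally show ?thesis
    by simp
qed

lemma merge_seq_Suc_0: "merge_seq (Suc 0) = merge_step"
proof
  fix L
  have "merge_seq 0 = return_pmf"
    by (rule ext) simp
  then show "merge_seq (Suc 0) L = merge_step L"
    by (simp add: bind_return_pmf')
qed

lemma root_coal_doubleton:
  "l1 \<noteq> l2 \<Longrightarrow> root_coal {l1, l2} = return_pmf {merge_lin l1 l2}"
  by (simp add: root_coal_def merge_seq_Suc_0 merge_step_doubleton)

lemma root_coal_singleton: "root_coal {l} = return_pmf {l}"
  by (simp add: root_coal_def)

lemma pmf_bind_root_coal_triple:
  assumes "l1 \<noteq> l2" "l1 \<noteq> l3" "l2 \<noteq> l3"
    "merge_lin l1 l2 \<noteq> l3" "merge_lin l1 l3 \<noteq> l2" "merge_lin l2 l3 \<noteq> l1"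
  shows "pmf (root_coal {l1, l2, l3} \<bind> K) G =
    (pmf (K {merge_lin (merge_lin l1 l2) l3}) G + pmf (K {merge_lin (merge_lin l1 l3) l2}) G
      + pmf (K {merge_lin (merge_lin l2 l3) l1}) G) / 3"
proof -
  define L where "L = {l1, l2, l3}"
  define P where "P = {(a, b). a \<in> L \<and> b \<in> L \<and> a \<noteq> b}"
  define h where "h = (\<lambda>(a, b). insert (merge_lin a b) (L - {a, b}))"
  have P: "P = {(l1, l2), (l2, l1), (l1, l3), (l3, l1), (l2, l3), (l3, l2)}"
    using assms unfolding P_def L_def by auto
  have "finite L" "card L = 3"
    using assms unfolding L_def by simp_all
  then have "merge_step L = map_pmf h (pmf_of_set P)"
    unfolding merge_step_def P_def h_def by simp
  moreover have "root_coal L = merge_step L \<bind> merge_step"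
    using \<open>card L = 3\<close> by (simp add: root_coal_def numeral_3_eq_3 merge_seq_Suc_0)
  ultimately have "root_coal L \<bind> K = pmf_of_set P \<bind> (\<lambda>p. merge_step (h p) \<bind> K)"
    by (simp add: bind_map_pmf bind_assoc_pmf)
  then have "pmf (root_coal L \<bind> K) G = (\<Sum>p\<in>P. pmf (merge_step (h p) \<bind> K) G) / card P"
    by (simp add: pmf_bind P integral_pmf_of_set)
  also have "\<dots> = (pmf (K {merge_lin (merge_lin l1 l2) l3}) G + pmf (K {merge_lin (merge_lin l1 l3) l2}) G
      + pmf (K {merge_lin (merge_lin l2 l3) l1}) G) / 3"
    using assms not_sym[OF assms(4)] not_sym[OF assms(5)] not_sym[OF assms(6)] unfolding P
    by (simp add: h_def L_def insert_Diff_if merge_step_doubleton bind_return_pmf merge_lin_commute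
        insert_commute)
  finally show ?thesis
    unfolding L_def .
qed

lemma branch_0:
  assumes "card L \<le> 3"
  shows "branch 0 L = return_pmf L"
proof (cases "card L \<le> 1")
  case False
  with assms have "card L \<in> {2, 3}"
    by auto
  then show ?thesis
    using False by (simp add: branch_def num_lin_dist_0 bind_return_pmf)
qed (simp add: branch_def)

lemma pmf_bind_branch_doubleton:
  assumes "T \<ge> 0" "l1 \<noteq> l2"
  shows "pmf (branch T {l1, l2} \<bind> K) G
     = (1 - exp (-T)) * pmf (K {merge_lin l1 l2}) G + exp (-T) * pmf (K {l1, l2}) G"
proof -
  have "branch T {l1, l2} = num_lin_dist 2 T \<bind> (\<lambda>j. merge_seq (2 - j) {l1, l2})"
    using assms(2) by (simp add: branch_def numeral_2_eq_2)
  moreover have "{1..2::nat} = {1, 2}"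
    by auto
  ultimately show ?thesis
    using assms by (simp add: bind_assoc_pmf pmf_bind_num_lin_dist g_coal_2
        merge_step_doubleton bind_return_pmf)
qed

lemma pmf_bind_split_ret_singleton:
  assumes "0 \<le> gam" "gam \<le> 1"
  shows "pmf (split_ret gam {l} \<bind> K) G = gam * pmf (K ({l}, {})) G + (1 - gam) * pmf (K ({}, {l})) G"
  unfolding split_ret_def using assms
  by (simp add: Pi_pmf_singleton bind_map_pmf pmf_bind)

lemma pmf_bind_split_ret_doubleton:
  assumes "0 \<le> gam" "gam \<le> 1" "l1 \<noteq> l2"
  shows "pmf (split_ret gam {l1, l2} \<bind> K) G =
     gam * gam * pmf (K ({l1, l2}, {})) G + gam * (1 - gam) * pmf (K ({l1}, {l2})) G
   + (1 - gam) * gam * pmf (K ({l2}, {l1})) G + (1 - gam) * (1 - gam) * pmf (K ({}, {l1, l2})) G"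
proof -
  have pair: "{l. l \<noteq> a \<longrightarrow> l = b} = {a, b}" for a b :: lineage
    by auto
  have single: "{l. l \<noteq> a \<and> (l \<noteq> a \<longrightarrow> l = b)} = {b}" if "a \<noteq> b" for a b :: lineage
    using that by auto
  show ?thesis
    unfolding split_ret_def using assms not_sym[OF assms(3)]
    by (simp add: Pi_pmf_insert Pi_pmf_singleton bind_map_pmf pmf_bind pair_pmf_def bind_assoc_pmf
        bind_return_pmf algebra_simps pair single insert_commute)
qed

definition taxa :: "lineage \<Rightarrow> copy set" where
  "taxa l = \<Union>l"

lemma taxa_leaf_lin [simp]: "taxa (leaf_lin g) = {g}"
  by (simp add: taxa_def leaf_lin_def)

lemma taxa_merge_lin [simp]: "taxa (merge_lin l1 l2) = taxa l1 \<union> taxa l2"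
  by (auto simp: taxa_def merge_lin_def)

text \<open>Coalescing lineages carry disjoint taxon sets, which discharges all distinctness
  side conditions of the limit computation.\<close>

lemma lineage_neq_if_disjoint_taxa [simp]:
  "taxa l1 \<inter> taxa l2 = {} \<Longrightarrow> taxa l1 \<noteq> {} \<Longrightarrow> l1 \<noteq> l2"
  by auto

lemma pmf_psi_limit:
  assumes "y \<ge> 0"
  shows "pmf (psi_limit y 0 (1/2)) T_disp1 = 1/2 - 5/12 * exp (-y)"
    and "pmf (psi_limit y 0 (1/2)) T_disp2 = 1/2 - 5/12 * exp (-y)"
    and "pmf (psi_limit y 0 (1/2)) T_ab_cd = exp (-y) / 4"
    and "pmf (psi_limit y 0 (1/2)) T_ac_bd = exp (-y) / 4"
  unfolding psi_limit_def using assms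
  by (simp_all add: pmf_bind_branch_doubleton pmf_bind_split_ret_singleton pmf_bind_split_ret_doubleton
      branch_0 root_coal_singleton root_coal_doubleton pmf_bind_root_coal_triple bind_return_pmf,
    simp_all add: indicator_def merge_lin_def leaf_lin_def T_disp1_def T_disp2_def T_ab_cd_def T_ac_bd_def
      singletons_def insert_commute set_eq_subset,
    simp_all add: field_simps)

lemma tendsto_psi_prob_limit:
  "((\<lambda>x. psi_prob x y w gam G) \<longlongrightarrow> pmf (psi_limit y w gam) G) at_top"
proof -
  have "\<forall>\<^sub>F x in at_top. norm (psi_prob x y w gam G - pmf (psi_limit y w gam) G) \<le> 4 * exp (-x)"
    using eventually_ge_at_top[of 0] by eventually_elim (simp add: psi_prob_close_to_limit)
  moreover have "((\<lambda>x::real. 4 * exp (-x)) \<longlongrightarrow> 0) at_top"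
    by (intro tendsto_mult_right_zero filterlim_compose[OF exp_at_bot filterlim_uminus_at_bot_at_top])
  ultimately have "((\<lambda>x. psi_prob x y w gam G - pmf (psi_limit y w gam) G) \<longlongrightarrow> 0) at_top"
    by (rule Lim_null_comparison)
  then show ?thesis
    by (rule LIM_zero_cancel)
qed

lemma limit_gap_iff:
  fixes y :: real
  shows "exp (-y) / 4 > 1/2 - 5/12 * exp (-y) \<longleftrightarrow> y < ln (4/3)"
proof -
  have "exp (-y) / 4 > 1/2 - 5/12 * exp (-y) \<longleftrightarrow> 3/4 < exp (-y)"
    by auto
  also have "\<dots> \<longleftrightarrow> ln (3/4) < ln (exp (-y))"
    by (rule ln_less_cancel_iff[symmetric]) auto
  also have "\<dots> \<longleftrightarrow> y < ln (4/3)"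
    by (simp add: ln_div, linarith)
  finally show ?thesis .
qed

lemma tendsto_psi_prob_half:
  assumes "y \<ge> 0"
  shows "((\<lambda>x. psi_prob x y 0 (1/2) T_ab_cd) \<longlongrightarrow> exp (- y) / 4) at_top"
    and "((\<lambda>x. psi_prob x y 0 (1/2) T_ac_bd) \<longlongrightarrow> exp (- y) / 4) at_top"
    and "((\<lambda>x. psi_prob x y 0 (1/2) T_disp1) \<longlongrightarrow> 1/2 - 5/12 * exp (- y)) at_top"
    and "((\<lambda>x. psi_prob x y 0 (1/2) T_disp2) \<longlongrightarrow> 1/2 - 5/12 * exp (- y)) at_top"
proof -
  note lim = tendsto_psi_prob_limit[of y 0 "1/2"] and val = pmf_psi_limit[OF assms]
  show "((\<lambda>x. psi_prob x y 0 (1/2) T_ab_cd) \<longlongrightarrow> exp (- y) / 4) at_top"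
    using lim[of T_ab_cd] unfolding val(3) .
  show "((\<lambda>x. psi_prob x y 0 (1/2) T_ac_bd) \<longlongrightarrow> exp (- y) / 4) at_top"
    using lim[of T_ac_bd] unfolding val(4) .
  show "((\<lambda>x. psi_prob x y 0 (1/2) T_disp1) \<longlongrightarrow> 1/2 - 5/12 * exp (- y)) at_top"
    using lim[of T_disp1] unfolding val(1) .
  show "((\<lambda>x. psi_prob x y 0 (1/2) T_disp2) \<longlongrightarrow> 1/2 - 5/12 * exp (- y)) at_top"
    using lim[of T_disp2] unfolding val(2) .
qed

lemma eventually_displayed_trees_not_most_likely:
  assumes "y \<ge> 0" "y < ln (4/3)"
  shows "\<forall>\<^sub>F x in at_top. \<forall>D \<in> displayed_trees. \<exists>G. psi_prob x y 0 (1/2) D < psi_prob x y 0 (1/2) G"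
proof -
  note lim = tendsto_psi_prob_half[OF assms(1)]
  have gap: "0 < exp (- y) / 4 - (1/2 - 5/12 * exp (- y))"
    by (simp only: diff_gt_0_iff_gt limit_gap_iff assms(2))
  have "\<forall>\<^sub>F x in at_top. 0 < psi_prob x y 0 (1/2) T_ab_cd - psi_prob x y 0 (1/2) T_disp1"
    using order_tendstoD(1)[OF tendsto_diff[OF lim(1) lim(3)] gap] .
  moreover have "\<forall>\<^sub>F x in at_top. 0 < psi_prob x y 0 (1/2) T_ab_cd - psi_prob x y 0 (1/2) T_disp2"
    using order_tendstoD(1)[OF tendsto_diff[OF lim(1) lim(4)] gap] .
  ultimately show ?thesis
    by eventually_elim (auto simp: displayed_trees_def)
qed

theorem mainTheorem3:
  fixes y :: real
  assumes "y > 0"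
  shows "((\<lambda>x. psi_prob x y 0 (1/2) T_ab_cd) \<longlongrightarrow> exp (- y) / 4) at_top
       \<and> ((\<lambda>x. psi_prob x y 0 (1/2) T_ac_bd) \<longlongrightarrow> exp (- y) / 4) at_top
       \<and> ((\<lambda>x. psi_prob x y 0 (1/2) T_disp1) \<longlongrightarrow> 1/2 - 5/12 * exp (- y)) at_top
       \<and> ((\<lambda>x. psi_prob x y 0 (1/2) T_disp2) \<longlongrightarrow> 1/2 - 5/12 * exp (- y)) at_top
       \<and> (exp (- y) / 4 > 1/2 - 5/12 * exp (- y) \<longleftrightarrow> y < ln (4/3))
       \<and> (y < ln (4/3) \<longrightarrow>
            (\<forall>\<^sub>F x in at_top. \<forall>D \<in> displayed_trees.
               \<exists>G. psi_prob x y 0 (1/2) D < psi_prob x y 0 (1/2) G))"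
proof -
  have "y \<ge> 0"
    using assms by simp
  then show ?thesis
    using tendsto_psi_prob_half limit_gap_iff eventually_displayed_trees_not_most_likely by blast
qed

end
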